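(* Let $\mathscr H$ be a separable complex Hilbert space, $d\ge1$ an integer, and let $F=(F_{ij})_{0\le i,j\le d}$ be a matrix of operators in $\mathscr H$, with $F_{00}=K$, $F_{i0}=R_i$, $F_{0j}=N_j$ ($i,j\ge1$), satisfying Hypothesis (C) below. Then: (1) $\mathrm{Dom}(R_k)\supset \mathrm{Dom}(K)\cup\mathrm{Dom}(K^* )$ and $\mathrm{Dom}(N_k^* )\supset\mathrm{Dom}(K)\cup\mathrm{Dom}(K^* )$ for all $k\ge1$. (2) $\mathrm{Dom}(F)=\mathrm{Dom}(K)$; moreover $2\mathrm{Re}\langle Ku|u\rangle=-\sum_{k\ge1}\|R_ku\|^2$ for all $u\in\mathrm{Dom}(K)$ and $2\mathrm{Re}\langle K^*v|v\rangle=-\sum_{k\ge1}\|N_k^*v\|^2$ for all $v\in\mathrm{Dom}(K^* )$. (3) For all $u\in\mathrm{Dom}(K)\cup\mathrm{Dom}(K^* )$ and all $i\ge1$: $N_i^*u=-\sum_{k\ge1}S_{ki}^*R_ku$ and $R_iu=-\sum_{k\ge1}S_{ik}N_k^*u$. (4) For all $u\in\mathrm{Dom}(K)$ and $i=1,\dots,d$: $N_iu=-\sum_{k\ge1}R_k^*S_{ki}u$. (5) For every choice of $u_0,\dots,u_d\in\mathrm{Dom}(F)$ and $v_0,\dots,v_d\in\widetilde D$, \[\sum_{i,j\ge0}\Big(\langle u_i|F_{ij}u_j\rangle+\langle F_{ji}u_i|u_j\rangle+\sum_{k\ge1}\langle F_{ki}u_i|F_{kj}u_j\rangle\Big)=0,\]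 \[\sum_{i,j\ge0}\Big(\langle v_i|F_{ji}^*v_j\rangle+\langle F_{ij}^*v_i|v_j\rangle+\sum_{k\ge1}\langle F_{ik}^*v_i|F_{jk}^*v_j\rangle\Big)=0.\]
   Context: Hypothesis (C): (i) each $F_{ij}$ is a closed operator in $\mathscr H$; set $\mathrm{Dom}(F)=\bigcap_{i,j\ge0}\mathrm{Dom}(F_{ij})$ and $\mathrm{Dom}(F^* )=\bigcap_{i,j\ge0}\mathrm{Dom}(F_{ji}^* )$. (ii) For $1\le i,j\le d$, $F_{ij}=S_{ij}-\delta_{ij}\mathbb 1$, where the $S_{ij}$ are bounded operators with $\sum_{k=1}^dS_{ki}^*S_{kj}=\sum_{k=1}^dS_{ik}S_{jk}^*=\delta_{ij}\mathbb 1$. (iii) There is a dense subspace $D$ which is a core for $K,R_i,N_i$ ($i=1,\dots,d$) and a dense subspace $\widetilde D$ which is a core for $K^*,R_i^*,N_i^*$ ($i=1,\dots,d$). (iv) $\mathrm{Dom}(N_i^* )\supset D\cup\widetilde D$, $\mathrm{Dom}(R_i)\supset D\cup\widetilde D$, $\mathrm{Dom}(N_i)\supset\mathrm{Dom}(K)$ for all $i\ge1$. (v) For all $k,i\ge1$ and $u\in\mathrm{Dom}(K)$: $S_{ki}u\in\mathrm{Dom}(R_k^* )$. (vi) $K$ and $K^*$ are generators of strongly continuous contraction semigroups on $\mathscr H$, and $2\mathrm{Re}\langle Ku|u\rangle=-\sum_{k\ge1}\|R_ku\|^2$ for all $u\in D$, $2\mathrm{Re}\langle K^*v|v\rangle=-\sum_{k\ge1}\|N_k^*v\|^2$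 for all $v\in\widetilde D$. (vii) $N_i^*u=-\sum_{k\ge1}S_{ki}^*R_ku$ for all $u\in D\cup\widetilde D$, $i\ge1$. (viii) There exist a positive self-adjoint operator $C$ on $\mathscr H$ and constants $\delta>0$, $b_1,b_2\ge0$ with $\mathrm{Dom}(C^{1/2})\subset\mathrm{Dom}(F)$ such that, with $C_\epsilon:=C(1+\epsilon C)^{-2}$: (a) for each $\epsilon\in(0,\delta)$ there is a dense subspace $D_\epsilon\subset\widetilde D$ with $C_\epsilon^{1/2}D_\epsilon\subset\widetilde D$ and each $F_{ij}^*C_\epsilon^{1/2}|_{D_\epsilon}$ bounded; (b) for all $\epsilon\in(0,\delta)$ and $u_0,\dots,u_d\in\mathrm{Dom}(F)$, $\sum_{i,j\ge0}\big(\langle u_i|C_\epsilon F_{ij}u_j\rangle+\langle F_{ji}u_i|C_\epsilon u_j\rangle+\sum_{k\ge1}\langle F_{ki}u_i|C_\epsilon F_{kj}u_j\rangle\big)\le\sum_{i\ge0}\big(b_1\langle u_i|C_\epsilon u_i\rangle+b_2\|u_i\|^2\big)$. *)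

theory Defs
  imports "HOL-Analysis.Analysis"
begin

text \<open>The inner product is antilinear in the first argument and linear
in the second (physics convention, as in the paper).\<close>

class complex_inner = real_normed_vector +
  fixes scaleC :: "complex \<Rightarrow> 'a \<Rightarrow> 'a" (infixr "*\<^sub>C" 75)
    and cinner :: "'a \<Rightarrow> 'a \<Rightarrow> complex"
  assumes scaleC_add_right: "a *\<^sub>C (x + y) = a *\<^sub>C x + a *\<^sub>C y"
    and scaleC_add_left: "(a + b) *\<^sub>C x = a *\<^sub>C x + b *\<^sub>C x"
    and scaleC_scaleC: "a *\<^sub>C (b *\<^sub>C x) = (a * b) *\<^sub>C x"
    and scaleC_one: "1 *\<^sub>C x = x"
    and scaleR_scaleC: "scaleR r x = complex_of_real r *\<^sub>C x"
    and cinner_commute: "cinner x y = cnj (cinner y x)"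
    and cinner_add_right: "cinner x (y + z) = cinner x y + cinner x z"
    and cinner_scaleC_right: "cinner x (a *\<^sub>C y) = a * cinner x y"
    and cinner_ge_zero: "0 \<le> Re (cinner x x)"
    and norm_eq_sqrt_cinner: "norm x = sqrt (Re (cinner x x))"

class chilbert_space = complex_inner + complete_space

instantiation complex :: chilbert_space
begin
definition scaleC_complex :: "complex \<Rightarrow> complex \<Rightarrow> complex" where
  "scaleC_complex a x = a * x"
definition cinner_complex :: "complex \<Rightarrow> complex \<Rightarrow> complex" where
  "cinner_complex x y = cnj x * y"
instance
  by standard (auto simp: scaleC_complex_def cinner_complex_def algebra_simps
      complex_norm_square cmod_def power2_eq_square scaleR_conv_of_real)
end

text \<open>An operator in H is a pair (domain, action); values outside the domain are irrelevant.\<close>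

type_synonym 'a linop = "'a set \<times> ('a \<Rightarrow> 'a)"

definition dom :: "'a linop \<Rightarrow> 'a set" where "dom T = fst T"
definition app :: "'a linop \<Rightarrow> 'a \<Rightarrow> 'a" where "app T = snd T"

definition op_eq :: "'a linop \<Rightarrow> 'a linop \<Rightarrow> bool" where
  "op_eq A B \<longleftrightarrow> dom A = dom B \<and> (\<forall>u\<in>dom A. app A u = app B u)"

definition graph :: "'a linop \<Rightarrow> ('a \<times> 'a) set" where
  "graph T = {(u, app T u) | u. u \<in> dom T}"

definition csubspace :: "'a::complex_inner set \<Rightarrow> bool" where
  "csubspace S \<longleftrightarrow> 0 \<in> S \<and> (\<forall>x\<in>S. \<forall>y\<in>S. x + y \<in> S) \<and> (\<forall>a. \<forall>x\<in>S. a *\<^sub>C x \<in> S)"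

definition linear_op :: "'a::complex_inner linop \<Rightarrow> bool" where
  "linear_op T \<longleftrightarrow> csubspace (dom T) \<and>
     (\<forall>x\<in>dom T. \<forall>y\<in>dom T. app T (x + y) = app T x + app T y) \<and>
     (\<forall>a. \<forall>x\<in>dom T. app T (a *\<^sub>C x) = a *\<^sub>C app T x)"

definition closed_op :: "'a::complex_inner linop \<Rightarrow> bool" where
  "closed_op T \<longleftrightarrow> linear_op T \<and> closed (graph T)"

definition adjoint :: "'a::complex_inner linop \<Rightarrow> 'a linop" where
  "adjoint T = ({v. \<exists>w. \<forall>u\<in>dom T. cinner (app T u) v = cinner u w},
                (\<lambda>v. SOME w. \<forall>u\<in>dom T. cinner (app T u) v = cinner u w))"

definition bounded_clinear :: "('a::complex_inner \<Rightarrow> 'a) \<Rightarrow> bool" where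
  "bounded_clinear f \<longleftrightarrow> (\<forall>x y. f (x + y) = f x + f y) \<and> (\<forall>a x. f (a *\<^sub>C x) = a *\<^sub>C f x) \<and>
     (\<exists>M. \<forall>x. norm (f x) \<le> norm x * M)"

definition badj :: "('a::complex_inner \<Rightarrow> 'a) \<Rightarrow> 'a \<Rightarrow> 'a" where
  "badj f = app (adjoint (UNIV, f))"

definition is_core :: "'a::complex_inner set \<Rightarrow> 'a linop \<Rightarrow> bool" where
  "is_core D T \<longleftrightarrow> D \<subseteq> dom T \<and> closure (graph (D, app T)) = graph T"

definition dense_subspace :: "'a::complex_inner set \<Rightarrow> bool" where
  "dense_subspace D \<longleftrightarrow> csubspace D \<and> closure D = UNIV"

definition op_comp :: "'a linop \<Rightarrow> 'a linop \<Rightarrow> 'a linop" where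
  "op_comp A B = ({u \<in> dom B. app B u \<in> dom A}, \<lambda>u. app A (app B u))"

definition contraction_semigroup :: "(real \<Rightarrow> 'a::complex_inner \<Rightarrow> 'a) \<Rightarrow> bool" where
  "contraction_semigroup P \<longleftrightarrow>
     (\<forall>t\<ge>0. bounded_clinear (P t) \<and> (\<forall>x. norm (P t x) \<le> norm x)) \<and>
     P 0 = id \<and> (\<forall>s\<ge>0. \<forall>t\<ge>0. P (s + t) = P s \<circ> P t) \<and>
     (\<forall>x. ((\<lambda>t. P t x) \<longlongrightarrow> x) (at_right 0))"

definition sg_generator :: "(real \<Rightarrow> 'a::complex_inner \<Rightarrow> 'a) \<Rightarrow> 'a linop" where
  "sg_generator P =
     ({x. \<exists>y. ((\<lambda>t. scaleR (1 / t) (P t x - x)) \<longlongrightarrow> y) (at_right 0)},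
      \<lambda>x. Lim (at_right 0) (\<lambda>t. scaleR (1 / t) (P t x - x)))"

definition generates_contraction_sg :: "'a::complex_inner linop \<Rightarrow> bool" where
  "generates_contraction_sg A \<longleftrightarrow> (\<exists>P. contraction_semigroup P \<and> op_eq A (sg_generator P))"

definition densely_defined :: "'a::complex_inner linop \<Rightarrow> bool" where
  "densely_defined T \<longleftrightarrow> closure (dom T) = UNIV"

definition selfadjoint :: "'a::complex_inner linop \<Rightarrow> bool" where
  "selfadjoint T \<longleftrightarrow> linear_op T \<and> densely_defined T \<and> op_eq T (adjoint T)"

definition positive_op :: "'a::complex_inner linop \<Rightarrow> bool" where
  "positive_op T \<longleftrightarrow> (\<forall>u\<in>dom T. 0 \<le> Re (cinner u (app T u)))"

definition pos_selfadjoint :: "'a::complex_inner linop \<Rightarrow> bool" where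
  "pos_selfadjoint T \<longleftrightarrow> selfadjoint T \<and> positive_op T"

definition op_sqrt :: "'a::complex_inner linop \<Rightarrow> 'a linop" where
  "op_sqrt C = (SOME S. pos_selfadjoint S \<and> op_eq (op_comp S S) C)"

definition resolv :: "real \<Rightarrow> 'a::complex_inner linop \<Rightarrow> 'a \<Rightarrow> 'a" where
  "resolv \<epsilon> C u = (THE w. w \<in> dom C \<and> w + scaleR \<epsilon> (app C w) = u)"

definition C_eps :: "real \<Rightarrow> 'a::complex_inner linop \<Rightarrow> 'a linop" where
  "C_eps \<epsilon> C = (UNIV, \<lambda>u. app C (resolv \<epsilon> C (resolv \<epsilon> C u)))"

end

theory Submission
  imports Defs
begin

text \<open>On the core D the dissipation identity 2 Re<Ku|u> = -\<Sum>k |R_k u|^2 bounds every R_k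
  in the graph norm of K; by closedness of R_k and N_i^* the identity and relation (vii) extend
  from D to Dom K, and in the same way from the core of K^* to Dom K^*.  Because S is unitary,
  N^* = -S^* R is equivalent to R = -S N^*, which gives (3); (4) follows by testing against the
  dense subspace of (iii).  In the quadratic forms of (5) the (0,0) entry is the dissipation
  identity, the (0,j) and (j,0) entries cancel by (3), and the remaining entries cancel because
  S is an isometry, respectively a co-isometry for the adjoint form.\<close>

section \<open>Complex inner product spaces\<close>

lemma cinner_add_left: "cinner (x + y) (z::'a::complex_inner) = cinner x z + cinner y z"
  by (metis cinner_commute cinner_add_right complex_cnj_add)

lemma cinner_scaleC_left: "cinner (a *\<^sub>C x) (y::'a::complex_inner) = cnj a * cinner x y"
  by (metis cinner_commute cinner_scaleC_right complex_cnj_mult)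

lemma cinner_scaleR_left: "cinner (r *\<^sub>R x) (y::'a::complex_inner) = of_real r * cinner x y"
  by (simp add: scaleR_scaleC cinner_scaleC_left)

lemma cinner_scaleR_right: "cinner x (r *\<^sub>R (y::'a::complex_inner)) = of_real r * cinner x y"
  by (simp add: scaleR_scaleC cinner_scaleC_right)

lemma cinner_zero_left [simp]: "cinner 0 (x::'a::complex_inner) = 0"
  using cinner_add_left[of 0 0 x] by simp

lemma cinner_zero_right [simp]: "cinner (x::'a::complex_inner) 0 = 0"
  using cinner_add_right[of x 0 0] by simp

lemma cinner_minus_left: "cinner (- x) (y::'a::complex_inner) = - cinner x y"
  using cinner_scaleR_left[of "-1" x y] by simp

lemma cinner_minus_right: "cinner x (- (y::'a::complex_inner)) = - cinner x y"
  using cinner_scaleR_right[of x "-1" y] by simp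

lemma cinner_diff_left: "cinner (x - y) (z::'a::complex_inner) = cinner x z - cinner y z"
  using cinner_add_left[of x "- y" z] by (simp add: cinner_minus_left)

lemma cinner_diff_right: "cinner x (y - (z::'a::complex_inner)) = cinner x y - cinner x z"
  using cinner_add_right[of x y "- z"] by (simp add: cinner_minus_right)

lemma cinner_sum_left: "cinner (\<Sum>i\<in>A. f i) (x::'a::complex_inner) = (\<Sum>i\<in>A. cinner (f i) x)"
  by (induction A rule: infinite_finite_induct) (auto simp: cinner_add_left)

lemma cinner_sum_right: "cinner (x::'a::complex_inner) (\<Sum>i\<in>A. f i) = (\<Sum>i\<in>A. cinner x (f i))"
  by (induction A rule: infinite_finite_induct) (auto simp: cinner_add_right)

lemma cinner_self: "cinner x (x::'a::complex_inner) = of_real ((norm x)\<^sup>2)"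
  using cinner_commute[of x x] norm_eq_sqrt_cinner[of x] cinner_ge_zero[of x]
  by (simp add: complex_eq_iff)

lemma norm_add_square:
  "(norm (x + y))\<^sup>2 = (norm x)\<^sup>2 + (norm (y::'a::complex_inner))\<^sup>2 + 2 * Re (cinner x y)"
proof -
  have "(norm (x + y))\<^sup>2 = Re (cinner (x + y) (x + y))"
    by (simp add: cinner_self)
  also have "\<dots> = Re (cinner x x) + Re (cinner y y) + Re (cinner x y) + Re (cinner y x)"
    by (simp add: cinner_add_left cinner_add_right)
  also have "Re (cinner y x) = Re (cinner x y)"
    using cinner_commute[of y x] by simp
  finally show ?thesis
    by (simp add: cinner_self)
qed

lemma norm_scaleC: "norm (a *\<^sub>C (x::'a::complex_inner)) = cmod a * norm x"
proof -
  have a: "a * cnj a = of_real ((cmod a)\<^sup>2)"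
    by (rule complex_norm_square[symmetric])
  have "cinner (a *\<^sub>C x) (a *\<^sub>C x) = of_real ((cmod a)\<^sup>2 * (norm x)\<^sup>2)"
    by (simp only: cinner_scaleC_left cinner_scaleC_right mult.assoc[symmetric] a cinner_self[of x]
        of_real_mult)
  then have "(norm (a *\<^sub>C x))\<^sup>2 = (cmod a * norm x)\<^sup>2"
    by (simp only: cinner_self of_real_eq_iff power_mult_distrib)
  then show ?thesis
    by (simp add: power2_eq_imp_eq)
qed

lemma Re_cinner_le: "Re (cinner x (y::'a::complex_inner)) \<le> norm x * norm y"
proof (cases "y = 0")
  case False
  define r where "r = Re (cinner x y)"
  define n where "n = (norm y)\<^sup>2"
  have n: "n > 0"
    using False by (simp add: n_def)
  have "0 \<le> (norm (x + - ((r / n) *\<^sub>R y)))\<^sup>2"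
    by simp
  also have "\<dots> = (norm x)\<^sup>2 + (r / n)\<^sup>2 * n - 2 * (r / n) * r"
    unfolding norm_add_square
    by (simp only: norm_minus_cancel norm_scaleR cinner_minus_right cinner_scaleR_right
        power_mult_distrib power2_abs n_def r_def) simp
  also have "\<dots> = (norm x)\<^sup>2 - r\<^sup>2 / n"
    using n by (simp add: power2_eq_square field_simps)
  finally have "r\<^sup>2 \<le> (norm x * norm y)\<^sup>2"
    using n by (simp add: n_def field_simps)
  then show ?thesis
    unfolding r_def by (metis abs_le_square_iff abs_ge_self order_trans abs_mult abs_norm_cancel)
qed simp

text \<open>Rotating y by a phase makes the inner product real and nonnegative.\<close>
lemma cinner_norm_le: "cmod (cinner x (y::'a::complex_inner)) \<le> norm x * norm y"
proof (cases "cinner x y = 0")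
  case False
  define a where "a = cnj (cinner x y) / cmod (cinner x y)"
  have "cnj (cinner x y) * cinner x y = of_real ((cmod (cinner x y))\<^sup>2)"
    by (metis complex_norm_square mult.commute)
  then have "cinner x (a *\<^sub>C y) = cmod (cinner x y)"
    using False by (simp add: a_def cinner_scaleC_right power2_eq_square)
  then have "cmod (cinner x y) = Re (cinner x (a *\<^sub>C y))"
    by simp
  also have "\<dots> \<le> norm x * norm (a *\<^sub>C y)"
    by (rule Re_cinner_le)
  also have "norm (a *\<^sub>C y) = norm y"
    using False by (simp add: a_def norm_scaleC norm_divide)
  finally show ?thesis .
qed simp

lemma bounded_bilinear_cinner: "bounded_bilinear (cinner :: 'a::complex_inner \<Rightarrow> 'a \<Rightarrow> complex)"
  unfolding bounded_bilinear_def
  by (auto simp: cinner_add_left cinner_add_right cinner_scaleR_left cinner_scaleR_right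
      scaleR_conv_of_real intro!: exI[of _ 1] cinner_norm_le)

lemmas tendsto_cinner [tendsto_intros] = bounded_bilinear.tendsto[OF bounded_bilinear_cinner]

lemma dense_cinner_eq:
  assumes "closure A = UNIV" and "\<And>v. v \<in> A \<Longrightarrow> cinner v x = cinner v y"
  shows "(x::'a::complex_inner) = y"
proof -
  obtain s where "\<And>n. s n \<in> A" "s \<longlonglongrightarrow> x - y"
    using assms(1) closure_sequential by (metis UNIV_I)
  then have "(\<lambda>n. cinner (s n) (x - y)) \<longlonglongrightarrow> cinner (x - y) (x - y)"
    by (intro tendsto_intros)
  moreover have "(\<lambda>n. cinner (s n) (x - y)) = (\<lambda>n. 0)"
    using \<open>\<And>n. s n \<in> A\<close> assms(2) by (simp add: cinner_diff_right)
  ultimately have "cinner (x - y) (x - y) = 0"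
    using LIMSEQ_const_iff by metis
  then show ?thesis
    by (simp add: cinner_self)
qed

lemma bounded_clinear_imp_bounded_linear:
  "bounded_clinear (f::'a::complex_inner \<Rightarrow> 'a) \<Longrightarrow> bounded_linear f"
  unfolding bounded_clinear_def bounded_linear_def bounded_linear_axioms_def linear_iff
  by (auto simp: scaleR_scaleC)

section \<open>Riesz representation and bounded adjoints\<close>

lemma parallelogram_law:
  "(norm (x - y))\<^sup>2 = 2 * (norm x)\<^sup>2 + 2 * (norm (y::'a::complex_inner))\<^sup>2 - (norm (x + y))\<^sup>2"
  using norm_add_square[of x y] norm_add_square[of x "- y"] by (simp add: cinner_minus_right)

lemma midpoint_convex_closed_has_min_norm:
  fixes A :: "'a::chilbert_space set"
  assumes "closed A" "A \<noteq> {}" and midpoint: "\<And>x y. x \<in> A \<Longrightarrow> y \<in> A \<Longrightarrow> (1/2) *\<^sub>R (x + y) \<in> A"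
  obtains x0 where "x0 \<in> A" "\<And>z. z \<in> A \<Longrightarrow> norm x0 \<le> norm z"
proof -
  define d where "d = Inf (norm ` A)"
  have bdd: "bdd_below (norm ` A)"
    by (meson bdd_belowI2 norm_ge_zero)
  have d_le: "d \<le> norm z" if "z \<in> A" for z
    unfolding d_def using that bdd by (simp add: cInf_lower)
  have "0 \<le> d"
    unfolding d_def using assms(2) by (auto intro!: cInf_greatest)
  have "\<exists>x\<in>A. (norm x)\<^sup>2 < d\<^sup>2 + 1 / (real n + 1)" for n
  proof -
    have "Inf (norm ` A) < sqrt (d\<^sup>2 + 1 / (real n + 1))"
      unfolding d_def[symmetric] by (rule real_less_rsqrt) simp
    then obtain x where "x \<in> A" and x: "norm x < sqrt (d\<^sup>2 + 1 / (real n + 1))"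
      using cInf_less_iff[of "norm ` A"] assms(2) bdd by auto
    have "(norm x)\<^sup>2 < (sqrt (d\<^sup>2 + 1 / (real n + 1)))\<^sup>2"
      using x by (intro power_strict_mono) auto
    also have "\<dots> = d\<^sup>2 + 1 / (real n + 1)"
      by (rule real_sqrt_pow2) simp
    finally show ?thesis
      using \<open>x \<in> A\<close> by blast
  qed
  then obtain s where s_A: "\<And>n. s n \<in> A" and s_norm: "\<And>n. (norm (s n))\<^sup>2 < d\<^sup>2 + 1 / (real n + 1)"
    by metis
  have s_dist: "(norm (s m - s n))\<^sup>2 \<le> 2 / (real m + 1) + 2 / (real n + 1)" for m n
  proof -
    have "2 * d \<le> norm (s m + s n)"
      using d_le[OF midpoint[OF s_A s_A, of m n]] by simp
    then have "4 * d\<^sup>2 \<le> (norm (s m + s n))\<^sup>2"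
      using \<open>0 \<le> d\<close> power_mono[of "2 * d" _ 2] by (simp add: power_mult_distrib)
    then show ?thesis
      using parallelogram_law[of "s m" "s n"] s_norm[of m] s_norm[of n] by linarith
  qed
  have "Cauchy s"
  proof (rule CauchyI)
    fix e :: real
    assume "0 < e"
    obtain N :: nat where N: "4 / e\<^sup>2 < real N"
      using reals_Archimedean2 by blast
    have "norm (s m - s n) < e" if "N \<le> m" "N \<le> n" for m n
    proof -
      have "(norm (s m - s n))\<^sup>2 \<le> 4 / (real N + 1)"
        using s_dist[of m n] that
          divide_left_mono[of "real N + 1" "real m + 1" 2] divide_left_mono[of "real N + 1" "real n + 1" 2]
        by simp
      also have "\<dots> < e\<^sup>2"
      proof -
        have "0 < e\<^sup>2"
          using \<open>0 < e\<close> by simp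
        have "4 < real N * e\<^sup>2"
          using N \<open>0 < e\<^sup>2\<close> by (simp add: divide_less_eq)
        moreover have "e\<^sup>2 * (real N + 1) = real N * e\<^sup>2 + e\<^sup>2"
          by (simp add: algebra_simps)
        ultimately have "4 < e\<^sup>2 * (real N + 1)"
          using \<open>0 < e\<^sup>2\<close> by linarith
        then show ?thesis
          by (simp add: divide_less_eq)
      qed
      finally show ?thesis
        using \<open>0 < e\<close> by (simp add: power_less_imp_less_base)
    qed
    then show "\<exists>M. \<forall>m\<ge>M. \<forall>n\<ge>M. norm (s m - s n) < e"
      by blast
  qed
  then obtain x0 where x0: "s \<longlonglongrightarrow> x0"
    using Cauchy_convergent_iff convergent_def by blast
  show ?thesis
  proof (rule that)
    show "x0 \<in> A"
      using \<open>closed A\<close> s_A x0 closed_sequentially by blast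
    fix z
    assume "z \<in> A"
    have "(\<lambda>n. (norm (s n))\<^sup>2) \<longlonglongrightarrow> (norm x0)\<^sup>2"
      using x0 by (intro tendsto_intros)
    moreover have "(\<lambda>n. d\<^sup>2 + 1 / (real n + 1)) \<longlonglongrightarrow> d\<^sup>2"
      using LIMSEQ_inverse_real_of_nat_add[of "d\<^sup>2"] by (simp add: inverse_eq_divide add.commute[of 1])
    moreover have "\<exists>N. \<forall>n\<ge>N. (norm (s n))\<^sup>2 \<le> d\<^sup>2 + 1 / (real n + 1)"
      using s_norm less_imp_le by metis
    ultimately have "(norm x0)\<^sup>2 \<le> d\<^sup>2"
      by (rule LIMSEQ_le)
    also have "\<dots> \<le> (norm z)\<^sup>2"
      using d_le[OF \<open>z \<in> A\<close>] \<open>0 \<le> d\<close> by (rule power_mono)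
    finally show "norm x0 \<le> norm z"
      by (rule power2_le_imp_le) simp
  qed
qed

lemma min_norm_orthogonal:
  assumes "\<And>t. norm x0 \<le> norm (x0 + t *\<^sub>C m)"
  shows "cinner x0 (m::'a::complex_inner) = 0"
proof (rule ccontr)
  define c where "c = cinner x0 m"
  assume "c \<noteq> 0"
  define r where "r = 1 / ((norm m)\<^sup>2 + 1)"
  define t where "t = - of_real r * cnj c"
  have r: "0 < r" "r * (norm m)\<^sup>2 < 1"
    by (simp_all add: r_def add_pos_nonneg field_simps)
  have "c * cnj c = of_real ((cmod c)\<^sup>2)"
    by (rule complex_norm_square[symmetric])
  then have Re_tc: "Re (t * c) = - r * (cmod c)\<^sup>2"
    unfolding t_def
    by (metis Re_complex_of_real mult.commute mult.left_commute mult_minus_left of_real_minus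
        of_real_mult)
  have norm_t: "cmod t = r * cmod c"
    using r by (simp add: t_def norm_mult)
  have "(norm (x0 + t *\<^sub>C m))\<^sup>2 = (norm x0)\<^sup>2 + (cmod t * norm m)\<^sup>2 + 2 * Re (t * c)"
    by (simp only: norm_add_square norm_scaleC cinner_scaleC_right c_def)
  also have "\<dots> = (norm x0)\<^sup>2 + (r * (norm m)\<^sup>2) * (r * (cmod c)\<^sup>2) - 2 * (r * (cmod c)\<^sup>2)"
    by (simp only: Re_tc norm_t) (simp add: algebra_simps power2_eq_square)
  also have "\<dots> < (norm x0)\<^sup>2"
    using r \<open>c \<noteq> 0\<close> mult_strict_right_mono[OF r(2), of "r * (cmod c)\<^sup>2"] by simp
  finally show False
    using assms[of t] by (meson power_less_imp_less_base norm_ge_zero not_le)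
qed

text \<open>The representing vector is a multiple of the element of least norm of the affine
  hyperplane on which the functional equals 1.\<close>
lemma riesz_representation:
  fixes \<psi> :: "'a::chilbert_space \<Rightarrow> complex"
  assumes add: "\<And>x y. \<psi> (x + y) = \<psi> x + \<psi> y"
    and scale: "\<And>a x. \<psi> (a *\<^sub>C x) = a * \<psi> x"
    and bounded: "\<And>x. cmod (\<psi> x) \<le> M * norm x"
  obtains w where "\<And>x. \<psi> x = cinner w x"
proof (cases "\<forall>x. \<psi> x = 0")
  case False
  have "bounded_linear \<psi>"
    using add bounded by (intro bounded_linear_intro[of _ M])
      (auto simp: scaleR_scaleC scale scaleC_complex_def mult.commute)
  then have "closed (\<psi> -` {1})"
    by (intro continuous_closed_vimage closed_singleton linear_continuous_at)
  moreover obtain x1 where "\<psi> x1 \<noteq> 0"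
    using False by blast
  then have "(1 / \<psi> x1) *\<^sub>C x1 \<in> \<psi> -` {1}"
    by (simp add: scale)
  moreover have "(1/2) *\<^sub>R (x + y) \<in> \<psi> -` {1}" if "x \<in> \<psi> -` {1}" "y \<in> \<psi> -` {1}" for x y
    using that by (simp add: scaleR_scaleC scale add)
  ultimately obtain x0 where "x0 \<in> \<psi> -` {1}" and min: "\<And>z. z \<in> \<psi> -` {1} \<Longrightarrow> norm x0 \<le> norm z"
    by (metis midpoint_convex_closed_has_min_norm empty_iff)
  then have x0: "\<psi> x0 = 1" and x0_min: "\<And>z. \<psi> z = 1 \<Longrightarrow> norm x0 \<le> norm z"
    by auto
  have orth: "cinner x0 m = 0" if "\<psi> m = 0" for m
    by (rule min_norm_orthogonal, rule x0_min) (simp add: add scale x0 that)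
  have diff: "\<psi> (x - y) = \<psi> x - \<psi> y" for x y
    using add[of "x - y" y] by (simp add: eq_diff_eq)
  have "x0 \<noteq> 0"
    using x0 add[of 0 0] by auto
  have "\<psi> x = cinner ((1 / (norm x0)\<^sup>2) *\<^sub>R x0) x" for x
  proof -
    have "cinner x0 (x - \<psi> x *\<^sub>C x0) = 0"
      by (rule orth) (simp add: diff scale x0)
    then have "cinner x0 x = \<psi> x * (norm x0)\<^sup>2"
      by (simp add: cinner_diff_right cinner_scaleC_right cinner_self)
    then show ?thesis
      using \<open>x0 \<noteq> 0\<close> by (simp add: cinner_scaleR_left)
  qed
  then show ?thesis
    using that by blast
qed (use that[of 0] in simp)

section \<open>Adjoints, closed operators and cores\<close>

lemma dom_pair [simp]: "dom (A, f) = A"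
  by (simp add: dom_def)

lemma app_pair [simp]: "app (A, f) = f"
  by (simp add: app_def)

lemma cinner_adjoint:
  assumes "v \<in> dom (adjoint T)" "u \<in> dom T"
  shows "cinner (app T u) v = cinner u (app (adjoint T) v)"
proof -
  have "\<exists>w. \<forall>u\<in>dom T. cinner (app T u) v = cinner u w"
    using assms(1) by (simp add: adjoint_def)
  then have "\<forall>u\<in>dom T. cinner (app T u) v = cinner u (app (adjoint T) v)"
    unfolding adjoint_def app_pair by (rule someI_ex)
  then show ?thesis
    using assms(2) by blast
qed

lemma cinner_adjoint_left:
  assumes "v \<in> dom (adjoint T)" "u \<in> dom T"
  shows "cinner (app (adjoint T) v) u = cinner v (app T u)"
  by (metis assms cinner_adjoint cinner_commute)

lemma adjointI:
  assumes "closure (dom T) = UNIV" and "\<And>u. u \<in> dom T \<Longrightarrow> cinner (app T u) v = cinner u w"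
  shows "v \<in> dom (adjoint T)" and "app (adjoint T) v = w"
proof -
  show v: "v \<in> dom (adjoint T)"
    using assms(2) by (auto simp: adjoint_def)
  show "app (adjoint T) v = w"
    using cinner_adjoint[OF v] assms(2) by (intro dense_cinner_eq[OF assms(1)]) simp
qed

lemma cinner_badj:
  assumes "bounded_clinear (f::'a::chilbert_space \<Rightarrow> 'a)"
  shows "cinner (f x) y = cinner x (badj f y)"
proof -
  obtain M where f: "\<And>x y. f (x + y) = f x + f y" "\<And>a x. f (a *\<^sub>C x) = a *\<^sub>C f x"
    "\<And>x. norm (f x) \<le> norm x * M"
    using assms unfolding bounded_clinear_def by blast
  obtain w where w: "\<And>x. cinner y (f x) = cinner w x"
  proof (rule riesz_representation[of "\<lambda>x. cinner y (f x)" "norm y * M"])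
    show "cmod (cinner y (f x)) \<le> norm y * M * norm x" for x
      using cinner_norm_le[of y "f x"] mult_left_mono[OF f(3)[of x] norm_ge_zero[of y]]
      by (simp add: ac_simps)
  qed (simp_all add: f cinner_add_right cinner_scaleC_right)
  have "cinner (f x) y = cinner x w" for x
    using w[of x] cinner_commute by metis
  then have "badj f y = w"
    unfolding badj_def by (intro adjointI(2)) simp_all
  then show ?thesis
    using w[of x] cinner_commute by metis
qed

lemma cinner_badj_left:
  assumes "bounded_clinear (f::'a::chilbert_space \<Rightarrow> 'a)"
  shows "cinner (badj f y) x = cinner y (f x)"
  by (metis assms cinner_badj cinner_commute)

lemma badj_eqI:
  assumes "\<And>x. cinner (f x) y = cinner x w"
  shows "badj f y = w"
  unfolding badj_def using assms by (intro adjointI(2)) simp_all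

lemma bounded_clinear_badj:
  assumes "bounded_clinear (f::'a::chilbert_space \<Rightarrow> 'a)"
  shows "bounded_clinear (badj f)"
proof -
  obtain M where M: "\<And>x. norm (f x) \<le> norm x * M"
    using assms unfolding bounded_clinear_def by blast
  have "norm (badj f y) \<le> norm y * M" for y
  proof -
    have "(norm (badj f y))\<^sup>2 = Re (cinner (f (badj f y)) y)"
      by (simp add: cinner_badj[OF assms] cinner_self)
    also have "\<dots> \<le> norm (badj f y) * M * norm y"
      using Re_cinner_le[of "f (badj f y)" y] mult_right_mono[OF M[of "badj f y"] norm_ge_zero[of y]]
      by simp
    finally have "norm (badj f y) * norm (badj f y) \<le> norm (badj f y) * (norm y * M)"
      by (simp add: power2_eq_square ac_simps)
    then show ?thesis
      by (cases "badj f y = 0") (use order_trans[OF norm_ge_zero M[of y]] in auto)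
  qed
  then show ?thesis
    unfolding bounded_clinear_def
    by (auto intro!: badj_eqI simp: cinner_badj[OF assms] cinner_add_right cinner_scaleC_right)
qed

lemma closed_op_limit:
  assumes "closed_op T" "\<And>n. s n \<in> dom T" "s \<longlonglongrightarrow> u" "(\<lambda>n. app T (s n)) \<longlonglongrightarrow> w"
  shows "u \<in> dom T" "app T u = w"
proof -
  have "(u, w) \<in> graph T"
  proof (rule closed_sequentially[of _ "\<lambda>n. (s n, app T (s n))"])
    show "closed (graph T)"
      using assms(1) by (simp add: closed_op_def)
    show "(s n, app T (s n)) \<in> graph T" for n
      using assms(2) by (auto simp: graph_def)
    show "(\<lambda>n. (s n, app T (s n))) \<longlonglongrightarrow> (u, w)"
      using assms(3,4) by (rule tendsto_Pair)
  qed
  then show "u \<in> dom T" "app T u = w"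
    by (auto simp: graph_def)
qed

lemma closed_op_limit_neg_sum:
  assumes "closed_op T" "\<And>n. s n \<in> dom T" "s \<longlonglongrightarrow> u"
    and T_s: "\<And>n. app T (s n) = - (\<Sum>k\<in>I. P k (X k n))"
    and P: "\<And>k. k \<in> I \<Longrightarrow> bounded_linear (P k)" and X: "\<And>k. k \<in> I \<Longrightarrow> X k \<longlonglongrightarrow> x k"
  shows "u \<in> dom T \<and> app T u = - (\<Sum>k\<in>I. P k (x k))"
proof -
  have "(\<lambda>n. app T (s n)) \<longlonglongrightarrow> - (\<Sum>k\<in>I. P k (x k))"
    unfolding T_s by (intro tendsto_minus tendsto_sum bounded_linear.tendsto[OF P] X)
  from closed_op_limit[OF assms(1-3) this] show ?thesis ..
qed

lemma closed_op_adjoint: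
  assumes dense: "closure (dom T) = UNIV"
  shows "closed_op (adjoint T)"
proof -
  have adj: "v \<in> dom (adjoint T) \<and> app (adjoint T) v = w"
    if "\<And>u. u \<in> dom T \<Longrightarrow> cinner (app T u) v = cinner u w" for v w
    using adjointI[OF dense that] by blast
  have "0 \<in> dom (adjoint T)"
    using adj[of 0 0] by simp
  moreover have "x + y \<in> dom (adjoint T) \<and>
      app (adjoint T) (x + y) = app (adjoint T) x + app (adjoint T) y"
    if "x \<in> dom (adjoint T)" "y \<in> dom (adjoint T)" for x y
    using that by (intro adj) (simp add: cinner_adjoint cinner_add_right)
  moreover have "a *\<^sub>C x \<in> dom (adjoint T) \<and> app (adjoint T) (a *\<^sub>C x) = a *\<^sub>C app (adjoint T) x"
    if "x \<in> dom (adjoint T)" for a x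
    using that by (intro adj) (simp add: cinner_adjoint cinner_scaleC_right)
  ultimately have "linear_op (adjoint T)"
    unfolding linear_op_def csubspace_def by blast
  moreover have "closed (graph (adjoint T))"
    unfolding closed_sequential_limits
  proof (intro allI impI, elim conjE)
    fix p q
    assume p: "\<forall>n. p n \<in> graph (adjoint T)" and pq: "p \<longlonglongrightarrow> q"
    have p_graph: "fst (p n) \<in> dom (adjoint T) \<and> snd (p n) = app (adjoint T) (fst (p n))" for n
      using p[rule_format, of n] unfolding graph_def by auto
    have "cinner (app T u) (fst q) = cinner u (snd q)" if "u \<in> dom T" for u
    proof (rule LIMSEQ_unique)
      show "(\<lambda>n. cinner (app T u) (fst (p n))) \<longlonglongrightarrow> cinner (app T u) (fst q)"
        by (intro tendsto_cinner tendsto_const tendsto_fst[OF pq])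
      have "(\<lambda>n. cinner (app T u) (fst (p n))) = (\<lambda>n. cinner u (snd (p n)))"
        using p_graph that by (simp add: cinner_adjoint)
      also have "\<dots> \<longlonglongrightarrow> cinner u (snd q)"
        by (intro tendsto_cinner tendsto_const tendsto_snd[OF pq])
      finally show "(\<lambda>n. cinner (app T u) (fst (p n))) \<longlonglongrightarrow> cinner u (snd q)" .
    qed
    then have "fst q \<in> dom (adjoint T) \<and> app (adjoint T) (fst q) = snd q"
      by (rule adj)
    then show "q \<in> graph (adjoint T)"
      unfolding graph_def by (intro CollectI exI[of _ "fst q"]) auto
  qed
  ultimately show ?thesis
    by (simp add: closed_op_def)
qed

lemma core_approximation:
  assumes "is_core D T" "u \<in> dom T"
  obtains s where "\<And>n. s n \<in> D" "s \<longlonglongrightarrow> u" "(\<lambda>n. app T (s n)) \<longlonglongrightarrow> app T u"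
proof -
  have "(u, app T u) \<in> closure (graph (D, app T))"
    using assms unfolding is_core_def graph_def by auto
  then obtain p where p: "\<And>n. p n \<in> graph (D, app T)" "p \<longlonglongrightarrow> (u, app T u)"
    by (meson closure_sequential)
  have "fst (p n) \<in> D \<and> snd (p n) = app T (fst (p n))" for n
    using p(1)[of n] by (auto simp: graph_def)
  moreover have "(\<lambda>n. fst (p n)) \<longlonglongrightarrow> u" "(\<lambda>n. snd (p n)) \<longlonglongrightarrow> app T u"
    using tendsto_fst[OF p(2)] tendsto_snd[OF p(2)] by simp_all
  ultimately show ?thesis
    using that[of "\<lambda>n. fst (p n)"] by simp
qed

section \<open>Dissipation identities on a core\<close>

lemma csubspace_diff: "csubspace D \<Longrightarrow> x \<in> D \<Longrightarrow> y \<in> D \<Longrightarrow> x - y \<in> D"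
  unfolding csubspace_def by (metis diff_conv_add_uminus scaleR_minus1_left scaleR_scaleC)

lemma linear_op_diff:
  assumes "linear_op T" "x \<in> dom T" "y \<in> dom T"
  shows "app T (x - y) = app T x - app T y"
proof -
  have "(-1) *\<^sub>C y \<in> dom T" "- y = (-1) *\<^sub>C y" "- app T y = (-1) *\<^sub>C app T y"
    using assms scaleR_scaleC[of "-1"] by (auto simp: linear_op_def csubspace_def)
  then show ?thesis
    using assms unfolding linear_op_def diff_conv_add_uminus by metis
qed

lemma Cauchy_if_square_dist_le:
  assumes "Cauchy s" and bound: "\<And>m n. (norm (f m - f n))\<^sup>2 \<le> C * norm (s m - s n)"
  shows "Cauchy f"
proof (rule CauchyI)
  fix e :: real
  assume "0 < e"
  then have "0 < e\<^sup>2 / (\<bar>C\<bar> + 1)"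
    by simp
  then obtain M where M: "\<And>m n. M \<le> m \<Longrightarrow> M \<le> n \<Longrightarrow> norm (s m - s n) < e\<^sup>2 / (\<bar>C\<bar> + 1)"
    using \<open>Cauchy s\<close> unfolding Cauchy_iff by blast
  have "norm (f m - f n) < e" if "M \<le> m" "M \<le> n" for m n
  proof -
    have "(norm (f m - f n))\<^sup>2 \<le> (\<bar>C\<bar> + 1) * norm (s m - s n)"
      using bound[of m n] by (smt (verit) mult_right_mono norm_ge_zero)
    also have "\<dots> < (\<bar>C\<bar> + 1) * (e\<^sup>2 / (\<bar>C\<bar> + 1))"
      using M[OF that] by (intro mult_strict_left_mono) auto
    also have "\<dots> = e\<^sup>2"
      by simp
    finally show ?thesis
      using \<open>0 < e\<close> by (simp add: power_less_imp_less_base)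
  qed
  then show "\<exists>M. \<forall>m\<ge>M. \<forall>n\<ge>M. norm (f m - f n) < e"
    by blast
qed

text \<open>A dissipation identity on a subspace D controls each R k in the graph norm of A, so it
  passes to limits of sequences from D that converge in the graph norm of A.\<close>
lemma dissipation_identity_limit:
  fixes A :: "'a::chilbert_space linop" and R :: "nat \<Rightarrow> 'a linop"
  assumes "finite I" "csubspace D" "linear_op A" "D \<subseteq> dom A"
    and R_closed: "\<And>k. k \<in> I \<Longrightarrow> closed_op (R k)" and R_dom: "\<And>k. k \<in> I \<Longrightarrow> D \<subseteq> dom (R k)"
    and diss: "\<And>w. w \<in> D \<Longrightarrow> 2 * Re (cinner (app A w) w) = - (\<Sum>k\<in>I. (norm (app (R k) w))\<^sup>2)"
    and s: "\<And>n. s n \<in> D" "s \<longlonglongrightarrow> u" "(\<lambda>n. app A (s n)) \<longlonglongrightarrow> a"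
  shows "\<And>k. k \<in> I \<Longrightarrow> u \<in> dom (R k) \<and> (\<lambda>n. app (R k) (s n)) \<longlonglongrightarrow> app (R k) u"
    and "2 * Re (cinner a u) = - (\<Sum>k\<in>I. (norm (app (R k) u))\<^sup>2)"
proof -
  have "Bseq (\<lambda>n. app A (s n))"
    using s(3) by (intro convergent_imp_Bseq convergentI)
  then obtain B where B: "\<And>n. norm (app A (s n)) \<le> B"
    by (metis BseqE)
  have R_conv: "u \<in> dom (R k) \<and> (\<lambda>n. app (R k) (s n)) \<longlonglongrightarrow> app (R k) u" if k: "k \<in> I" for k
  proof -
    have "(norm (app (R k) (s m) - app (R k) (s n)))\<^sup>2 \<le> 4 * B * norm (s m - s n)" for m n
    proof -
      define w where "w = s m - s n"
      have "w \<in> D"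
        unfolding w_def using \<open>csubspace D\<close> by (intro csubspace_diff s(1))
      have R_w: "app (R k) w = app (R k) (s m) - app (R k) (s n)"
        unfolding w_def using R_closed[OF k] R_dom[OF k] s(1)
        by (intro linear_op_diff) (auto simp: closed_op_def)
      have "app A w = app A (s m) - app A (s n)"
        unfolding w_def using \<open>D \<subseteq> dom A\<close> s(1)
        by (intro linear_op_diff[OF \<open>linear_op A\<close>]) auto
      then have "norm (app A w) \<le> 2 * B"
        using norm_triangle_ineq4[of "app A (s m)" "app A (s n)"] B[of m] B[of n] by simp
      have "(norm (app (R k) w))\<^sup>2 \<le> (\<Sum>j\<in>I. (norm (app (R j) w))\<^sup>2)"
        using \<open>finite I\<close> k by (intro member_le_sum) auto
      also have "\<dots> = - 2 * Re (cinner (app A w) w)"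
        using diss[OF \<open>w \<in> D\<close>] by linarith
      also have "\<dots> \<le> 2 * (norm (app A w) * norm w)"
        using Re_cinner_le[of "- app A w" w]
        unfolding cinner_minus_left norm_minus_cancel uminus_complex.sel by linarith
      also have "\<dots> \<le> 2 * (2 * B * norm w)"
        using mult_right_mono[OF \<open>norm (app A w) \<le> 2 * B\<close> norm_ge_zero[of w]] by (simp add: ac_simps)
      finally show ?thesis
        unfolding R_w[symmetric] w_def[symmetric] by simp
    qed
    then have "Cauchy (\<lambda>n. app (R k) (s n))"
      by (intro Cauchy_if_square_dist_le[OF LIMSEQ_imp_Cauchy[OF s(2)]])
    then obtain y where y: "(\<lambda>n. app (R k) (s n)) \<longlonglongrightarrow> y"
      using Cauchy_convergent_iff convergent_def by blast
    have "\<And>n. s n \<in> dom (R k)"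
      using s(1) R_dom[OF k] by blast
    from closed_op_limit[OF R_closed[OF k] this s(2) y] show ?thesis
      using y by simp
  qed
  then show "\<And>k. k \<in> I \<Longrightarrow> u \<in> dom (R k) \<and> (\<lambda>n. app (R k) (s n)) \<longlonglongrightarrow> app (R k) u" .
  have "(\<lambda>n. 2 * Re (cinner (app A (s n)) (s n))) \<longlonglongrightarrow> 2 * Re (cinner a u)"
    by (intro tendsto_mult tendsto_const tendsto_Re tendsto_cinner s(2,3))
  moreover have "(\<lambda>n. 2 * Re (cinner (app A (s n)) (s n)))
      = (\<lambda>n. - (\<Sum>k\<in>I. (norm (app (R k) (s n)))\<^sup>2))"
    by (rule ext) (rule diss[OF s(1)])
  moreover have "(\<lambda>n. - (\<Sum>k\<in>I. (norm (app (R k) (s n)))\<^sup>2)) \<longlonglongrightarrow> - (\<Sum>k\<in>I. (norm (app (R k) u))\<^sup>2)"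
    by (intro tendsto_minus tendsto_sum tendsto_power tendsto_norm) (use R_conv in blast)
  ultimately show "2 * Re (cinner a u) = - (\<Sum>k\<in>I. (norm (app (R k) u))\<^sup>2)"
    using LIMSEQ_unique by auto
qed

section \<open>Block-matrix identities\<close>

lemma neg_sum_relation_inverse:
  fixes P Q :: "nat \<Rightarrow> nat \<Rightarrow> 'a::real_normed_vector \<Rightarrow> 'a"
  assumes "finite I" "i \<in> I"
    and P_linear: "\<And>k. k \<in> I \<Longrightarrow> bounded_linear (P i k)"
    and PQ: "\<And>j w. j \<in> I \<Longrightarrow> (\<Sum>k\<in>I. P i k (Q k j w)) = (if i = j then w else 0)"
    and y: "\<And>k. k \<in> I \<Longrightarrow> y k = - (\<Sum>l\<in>I. Q k l (x l))"
  shows "x i = - (\<Sum>k\<in>I. P i k (y k))"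
proof -
  have "(\<Sum>k\<in>I. P i k (y k)) = - (\<Sum>k\<in>I. \<Sum>l\<in>I. P i k (Q k l (x l)))"
    using y P_linear by (simp add: linear_neg linear_sum bounded_linear.linear sum_negf)
  also have "\<dots> = - (\<Sum>l\<in>I. \<Sum>k\<in>I. P i k (Q k l (x l)))"
    by (rule arg_cong[OF sum.swap])
  also have "\<dots> = - (\<Sum>l\<in>I. if i = l then x l else 0)"
    using PQ by simp
  also have "\<dots> = - x i"
    using assms(1,2) by simp
  finally show ?thesis
    by simp
qed

lemma block_form_entry_sym:
  fixes G :: "nat \<Rightarrow> nat \<Rightarrow> 'a::complex_inner \<Rightarrow> 'a"
  shows "cinner (x i) (G i j (x j)) + cinner (G j i (x i)) (x j)
      + (\<Sum>k\<in>K. cinner (G k i (x i)) (G k j (x j)))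
    = cnj (cinner (x j) (G j i (x i)) + cinner (G i j (x j)) (x i)
      + (\<Sum>k\<in>K. cinner (G k j (x j)) (G k i (x i))))"
  by (simp only: complex_cnj_add cnj_sum cinner_commute[of "x j"] cinner_commute[of "G k j (x j)" for k])
    (simp add: cinner_commute[symmetric] ac_simps)

lemma block_form_vanishes:
  fixes G T :: "nat \<Rightarrow> nat \<Rightarrow> 'a::complex_inner \<Rightarrow> 'a" and x :: "nat \<Rightarrow> 'a"
  assumes block: "\<And>i j. i \<in> {1..d} \<Longrightarrow> j \<in> {1..d} \<Longrightarrow>
      G i j (x j) = T i j (x j) - (if i = j then x j else 0)"
    and isometric: "\<And>i j. i \<in> {1..d} \<Longrightarrow> j \<in> {1..d} \<Longrightarrow>
      (\<Sum>k=1..d. cinner (T k i (x i)) (T k j (x j))) = (if i = j then cinner (x i) (x j) else 0)"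
    and diss: "2 * Re (cinner (G 0 0 (x 0)) (x 0)) = - (\<Sum>k=1..d. (norm (G k 0 (x 0)))\<^sup>2)"
    and boundary: "\<And>j. j \<in> {1..d} \<Longrightarrow>
      cinner (x 0) (G 0 j (x j)) = - (\<Sum>k=1..d. cinner (G k 0 (x 0)) (T k j (x j)))"
  shows "(\<Sum>i=0..d. \<Sum>j=0..d. cinner (x i) (G i j (x j)) + cinner (G j i (x i)) (x j)
      + (\<Sum>k=1..d. cinner (G k i (x i)) (G k j (x j)))) = 0"
proof -
  define E where "E i j = cinner (x i) (G i j (x j)) + cinner (G j i (x i)) (x j)
      + (\<Sum>k=1..d. cinner (G k i (x i)) (G k j (x j)))" for i j
  have E_sym: "E i j = cnj (E j i)" for i j
    unfolding E_def by (rule block_form_entry_sym)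
  have E_00: "E 0 0 = 0"
  proof -
    have "cinner (x 0) (G 0 0 (x 0)) + cinner (G 0 0 (x 0)) (x 0)
        = of_real (2 * Re (cinner (G 0 0 (x 0)) (x 0)))"
      using complex_add_cnj[of "cinner (G 0 0 (x 0)) (x 0)"] cinner_commute[of "x 0"]
      by (simp add: add.commute)
    moreover have "(\<Sum>k=1..d. cinner (G k 0 (x 0)) (G k 0 (x 0)))
        = of_real (\<Sum>k=1..d. (norm (G k 0 (x 0)))\<^sup>2)"
      by (simp only: cinner_self of_real_sum)
    ultimately show ?thesis
      unfolding E_def diss by simp
  qed
  have E_0j: "E 0 j = 0" if j: "j \<in> {1..d}" for j
  proof -
    have "(\<Sum>k=1..d. cinner (G k 0 (x 0)) (G k j (x j)))
        = (\<Sum>k=1..d. cinner (G k 0 (x 0)) (T k j (x j))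
            - (if k = j then cinner (G k 0 (x 0)) (x j) else 0))"
      using j by (intro sum.cong) (simp_all add: block cinner_diff_right)
    also have "\<dots> = (\<Sum>k=1..d. cinner (G k 0 (x 0)) (T k j (x j))) - cinner (G j 0 (x 0)) (x j)"
      using j by (simp add: sum_subtractf)
    finally show ?thesis
      unfolding E_def using boundary[OF j] by simp
  qed
  have E_ij: "E i j = 0" if i: "i \<in> {1..d}" and j: "j \<in> {1..d}" for i j
  proof -
    have "(\<Sum>k=1..d. cinner (G k i (x i)) (G k j (x j)))
        = (\<Sum>k=1..d. cinner (T k i (x i)) (T k j (x j))
            - (if k = j then cinner (T k i (x i)) (x j) else 0)
            - (if k = i then cinner (x i) (T k j (x j)) else 0)
            + (if k = i then if k = j then cinner (x i) (x j) else 0 else 0))"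
      using i j by (intro sum.cong) (auto simp: block cinner_diff_left cinner_diff_right)
    also have "\<dots> = (if i = j then cinner (x i) (x j) else 0) - cinner (T j i (x i)) (x j)
        - cinner (x i) (T i j (x j)) + (if i = j then cinner (x i) (x j) else 0)"
      using i j isometric[OF i j] by (simp add: sum.distrib sum_subtractf)
    finally show ?thesis
      unfolding E_def using i j by (simp add: block cinner_diff_left cinner_diff_right)
  qed
  have "E i j = 0" if i: "i \<in> {0..d}" and j: "j \<in> {0..d}" for i j
  proof -
    consider "i = 0" "j = 0" | "i = 0" "j \<in> {1..d}" | "i \<in> {1..d}" "j = 0"
      | "i \<in> {1..d}" "j \<in> {1..d}"
      using i j by fastforce
    then show ?thesis
    proof cases
      case 3
      then show ?thesis
        using E_0j[of i] E_sym[of i j] by simp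
    qed (use E_00 E_0j E_ij in simp_all)
  qed
  then show ?thesis
    unfolding E_def[symmetric] by simp
qed

section \<open>Hypothesis (C)\<close>

locale hypothesis_C =
  fixes F :: "nat \<Rightarrow> nat \<Rightarrow> 'a::chilbert_space linop" and S :: "nat \<Rightarrow> nat \<Rightarrow> 'a \<Rightarrow> 'a"
    and d :: nat and D Dt :: "'a set"
  assumes F_closed: "\<And>i j. i \<le> d \<Longrightarrow> j \<le> d \<Longrightarrow> closed_op (F i j)"
    and F_S: "\<And>i j. i \<in> {1..d} \<Longrightarrow> j \<in> {1..d} \<Longrightarrow>
      op_eq (F i j) (UNIV, \<lambda>u. S i j u - (if i = j then u else 0))"
    and S_bounded: "\<And>i j. i \<in> {1..d} \<Longrightarrow> j \<in> {1..d} \<Longrightarrow> bounded_clinear (S i j)"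
    and S_isometric: "\<And>i j u. i \<in> {1..d} \<Longrightarrow> j \<in> {1..d} \<Longrightarrow>
      (\<Sum>k=1..d. badj (S k i) (S k j u)) = (if i = j then u else 0)"
    and S_coisometric: "\<And>i j u. i \<in> {1..d} \<Longrightarrow> j \<in> {1..d} \<Longrightarrow>
      (\<Sum>k=1..d. S i k (badj (S j k) u)) = (if i = j then u else 0)"
    and D: "dense_subspace D" "is_core D (F 0 0)"
    and Dt: "dense_subspace Dt" "is_core Dt (adjoint (F 0 0))"
    and Dt_dom: "\<And>i. i \<in> {1..d} \<Longrightarrow> Dt \<subseteq> dom (adjoint (F i 0))"
    and N_adj_dom: "\<And>i. i \<in> {1..d} \<Longrightarrow> D \<union> Dt \<subseteq> dom (adjoint (F 0 i))"
    and R_dom: "\<And>i. i \<in> {1..d} \<Longrightarrow> D \<union> Dt \<subseteq> dom (F i 0)"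
    and N_dom: "\<And>i. i \<in> {1..d} \<Longrightarrow> dom (F 0 0) \<subseteq> dom (F 0 i)"
    and S_dom: "\<And>k i u. k \<in> {1..d} \<Longrightarrow> i \<in> {1..d} \<Longrightarrow> u \<in> dom (F 0 0) \<Longrightarrow>
      S k i u \<in> dom (adjoint (F k 0))"
    and diss_D: "\<And>u. u \<in> D \<Longrightarrow>
      2 * Re (cinner (app (F 0 0) u) u) = - (\<Sum>k=1..d. (norm (app (F k 0) u))\<^sup>2)"
    and diss_Dt: "\<And>v. v \<in> Dt \<Longrightarrow>
      2 * Re (cinner (app (adjoint (F 0 0)) v) v) = - (\<Sum>k=1..d. (norm (app (adjoint (F 0 k)) v))\<^sup>2)"
    and N_adj_eq: "\<And>i u. i \<in> {1..d} \<Longrightarrow> u \<in> D \<union> Dt \<Longrightarrow>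
      app (adjoint (F 0 i)) u = - (\<Sum>k=1..d. badj (S k i) (app (F k 0) u))"
begin

abbreviation K where "K \<equiv> F 0 0"
abbreviation R where "R k \<equiv> F k 0"
abbreviation N where "N k \<equiv> F 0 k"

lemma S_linear:
  assumes "i \<in> {1..d}" "j \<in> {1..d}"
  shows "bounded_linear (S i j)" "bounded_linear (badj (S i j))"
  using S_bounded[OF assms] bounded_clinear_badj
  by (auto intro: bounded_clinear_imp_bounded_linear)

lemma F_block:
  assumes "i \<in> {1..d}" "j \<in> {1..d}"
  shows "app (F i j) u = S i j u - (if i = j then u else 0)"
    and "app (adjoint (F i j)) v = badj (S i j) v - (if i = j then v else 0)"
proof -
  have dom: "dom (F i j) = UNIV" and app: "\<And>u. app (F i j) u = S i j u - (if i = j then u else 0)"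
    using F_S[OF assms] by (auto simp: op_eq_def)
  then show "app (F i j) u = S i j u - (if i = j then u else 0)"
    by simp
  show "app (adjoint (F i j)) v = badj (S i j) v - (if i = j then v else 0)"
    by (rule adjointI(2)) (simp_all add: dom app cinner_diff_left cinner_diff_right
        cinner_badj[OF S_bounded[OF assms]])
qed

lemma dom_K_dense: "closure (dom K) = UNIV"
  using D closure_mono[of D "dom K"] by (auto simp: is_core_def dense_subspace_def)

lemma closed_op_adjoint_N: "i \<in> {1..d} \<Longrightarrow> closed_op (adjoint (N i))"
  using dom_K_dense closure_mono[OF N_dom] by (intro closed_op_adjoint) auto

lemma coisometric_solve:
  assumes "\<And>k. k \<in> {1..d} \<Longrightarrow> y k = - (\<Sum>l=1..d. badj (S l k) (x l))" "i \<in> {1..d}"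
  shows "x i = - (\<Sum>k=1..d. S i k (y k))"
  by (rule neg_sum_relation_inverse[where Q = "\<lambda>k l. badj (S l k)"])
    (use assms S_linear S_coisometric in auto)

lemma isometric_solve:
  assumes "\<And>k. k \<in> {1..d} \<Longrightarrow> y k = - (\<Sum>l=1..d. S k l (x l))" "i \<in> {1..d}"
  shows "x i = - (\<Sum>k=1..d. badj (S k i) (y k))"
  by (rule neg_sum_relation_inverse[where Q = S])
    (use assms S_linear S_isometric in auto)

lemma dom_K:
  assumes "u \<in> dom K"
  shows "\<And>k. k \<in> {1..d} \<Longrightarrow> u \<in> dom (R k) \<and> u \<in> dom (adjoint (N k))"
    and "2 * Re (cinner (app K u) u) = - (\<Sum>k=1..d. (norm (app (R k) u))\<^sup>2)"
    and "\<And>i. i \<in> {1..d} \<Longrightarrow> app (adjoint (N i)) u = - (\<Sum>k=1..d. badj (S k i) (app (R k) u))"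
proof -
  obtain s where s: "\<And>n. s n \<in> D" "s \<longlonglongrightarrow> u" "(\<lambda>n. app K (s n)) \<longlonglongrightarrow> app K u"
    using core_approximation[OF D(2) assms] by blast
  have K: "csubspace D" "linear_op K" "D \<subseteq> dom K"
    using D F_closed[of 0 0] by (auto simp: dense_subspace_def closed_op_def is_core_def)
  have R: "\<And>k. k \<in> {1..d} \<Longrightarrow> closed_op (R k)" "\<And>k. k \<in> {1..d} \<Longrightarrow> D \<subseteq> dom (R k)"
    using F_closed R_dom by auto
  have limit: "\<And>k. k \<in> {1..d} \<Longrightarrow> u \<in> dom (R k) \<and> (\<lambda>n. app (R k) (s n)) \<longlonglongrightarrow> app (R k) u"
    "2 * Re (cinner (app K u) u) = - (\<Sum>k=1..d. (norm (app (R k) u))\<^sup>2)"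
    by (rule dissipation_identity_limit[OF finite_atLeastAtMost K _ _ diss_D s]; use R in blast)+
  then show "2 * Re (cinner (app K u) u) = - (\<Sum>k=1..d. (norm (app (R k) u))\<^sup>2)"
    by blast
  have N_adj_u: "u \<in> dom (adjoint (N i)) \<and>
      app (adjoint (N i)) u = - (\<Sum>k=1..d. badj (S k i) (app (R k) u))" if i: "i \<in> {1..d}" for i
  proof (rule closed_op_limit_neg_sum[OF closed_op_adjoint_N[OF i] _ s(2), where
        P = "\<lambda>k. badj (S k i)" and X = "\<lambda>k n. app (R k) (s n)" and x = "\<lambda>k. app (R k) u"])
    show "s n \<in> dom (adjoint (N i))" for n
      using N_adj_dom[OF i] s(1) by blast
    show "app (adjoint (N i)) (s n) = - (\<Sum>k=1..d. badj (S k i) (app (R k) (s n)))" for n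
      using N_adj_eq[OF i] s(1) by blast
    show "bounded_linear (badj (S k i))" if "k \<in> {1..d}" for k
      using S_linear(2)[OF that i] .
    show "(\<lambda>n. app (R k) (s n)) \<longlonglongrightarrow> app (R k) u" if "k \<in> {1..d}" for k
      using limit(1)[OF that] by blast
  qed
  show "\<And>k. k \<in> {1..d} \<Longrightarrow> u \<in> dom (R k) \<and> u \<in> dom (adjoint (N k))"
    using limit(1) N_adj_u by blast
  show "\<And>i. i \<in> {1..d} \<Longrightarrow> app (adjoint (N i)) u = - (\<Sum>k=1..d. badj (S k i) (app (R k) u))"
    using N_adj_u by blast
qed

lemma dom_K_adjoint:
  assumes "v \<in> dom (adjoint K)"
  shows "\<And>k. k \<in> {1..d} \<Longrightarrow> v \<in> dom (R k) \<and> v \<in> dom (adjoint (N k))"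
    and "2 * Re (cinner (app (adjoint K) v) v) = - (\<Sum>k=1..d. (norm (app (adjoint (N k)) v))\<^sup>2)"
    and "\<And>i. i \<in> {1..d} \<Longrightarrow> app (R i) v = - (\<Sum>k=1..d. S i k (app (adjoint (N k)) v))"
proof -
  obtain s where s: "\<And>n. s n \<in> Dt" "s \<longlonglongrightarrow> v" "(\<lambda>n. app (adjoint K) (s n)) \<longlonglongrightarrow> app (adjoint K) v"
    using core_approximation[OF Dt(2) assms] by blast
  have K_adj: "csubspace Dt" "linear_op (adjoint K)" "Dt \<subseteq> dom (adjoint K)"
    using Dt closed_op_adjoint[OF dom_K_dense]
    by (auto simp: dense_subspace_def closed_op_def is_core_def)
  have N_adj: "\<And>k. k \<in> {1..d} \<Longrightarrow> closed_op (adjoint (N k))"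
    "\<And>k. k \<in> {1..d} \<Longrightarrow> Dt \<subseteq> dom (adjoint (N k))"
    using closed_op_adjoint_N N_adj_dom by auto
  have limit: "\<And>k. k \<in> {1..d} \<Longrightarrow>
      v \<in> dom (adjoint (N k)) \<and> (\<lambda>n. app (adjoint (N k)) (s n)) \<longlonglongrightarrow> app (adjoint (N k)) v"
    "2 * Re (cinner (app (adjoint K) v) v) = - (\<Sum>k=1..d. (norm (app (adjoint (N k)) v))\<^sup>2)"
    by (rule dissipation_identity_limit[OF finite_atLeastAtMost K_adj _ _ diss_Dt s]; use N_adj in blast)+
  then show "2 * Re (cinner (app (adjoint K) v) v) = - (\<Sum>k=1..d. (norm (app (adjoint (N k)) v))\<^sup>2)"
    by blast
  have R_v: "v \<in> dom (R i) \<and> app (R i) v = - (\<Sum>k=1..d. S i k (app (adjoint (N k)) v))"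
    if i: "i \<in> {1..d}" for i
  proof (rule closed_op_limit_neg_sum[OF F_closed[of i 0] _ s(2), where P = "S i"
        and X = "\<lambda>k n. app (adjoint (N k)) (s n)" and x = "\<lambda>k. app (adjoint (N k)) v"])
    show "i \<le> d" "0 \<le> d"
      using i by auto
    show "s n \<in> dom (R i)" for n
      using R_dom[OF i] s(1) by blast
    show "app (R i) (s n) = - (\<Sum>k=1..d. S i k (app (adjoint (N k)) (s n)))" for n
      by (rule coisometric_solve[where x = "\<lambda>l. app (R l) (s n)", OF _ i]) (use N_adj_eq s(1) in blast)
    show "bounded_linear (S i k)" if "k \<in> {1..d}" for k
      using S_linear(1)[OF i that] .
    show "(\<lambda>n. app (adjoint (N k)) (s n)) \<longlonglongrightarrow> app (adjoint (N k)) v" if "k \<in> {1..d}" for k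
      using limit(1)[OF that] by blast
  qed
  show "\<And>k. k \<in> {1..d} \<Longrightarrow> v \<in> dom (R k) \<and> v \<in> dom (adjoint (N k))"
    using limit(1) R_v by blast
  show "\<And>i. i \<in> {1..d} \<Longrightarrow> app (R i) v = - (\<Sum>k=1..d. S i k (app (adjoint (N k)) v))"
    using R_v by blast
qed

lemma R_N_relations:
  assumes "u \<in> dom K \<union> dom (adjoint K)" "i \<in> {1..d}"
  shows "app (adjoint (N i)) u = - (\<Sum>k=1..d. badj (S k i) (app (R k) u))"
    and "app (R i) u = - (\<Sum>k=1..d. S i k (app (adjoint (N k)) u))"
proof -
  have "(\<forall>i\<in>{1..d}. app (adjoint (N i)) u = - (\<Sum>k=1..d. badj (S k i) (app (R k) u))) \<and>
      (\<forall>i\<in>{1..d}. app (R i) u = - (\<Sum>k=1..d. S i k (app (adjoint (N k)) u)))"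
  proof (cases "u \<in> dom K")
    case True
    note N_adj_u = dom_K(3)[OF True]
    show ?thesis
      using N_adj_u coisometric_solve[where x = "\<lambda>l. app (R l) u", OF N_adj_u] by blast
  next
    case False
    then have "u \<in> dom (adjoint K)"
      using assms(1) by blast
    note R_u = dom_K_adjoint(3)[OF this]
    show ?thesis
      using R_u isometric_solve[where x = "\<lambda>l. app (adjoint (N l)) u", OF R_u] by blast
  qed
  then show "app (adjoint (N i)) u = - (\<Sum>k=1..d. badj (S k i) (app (R k) u))"
    and "app (R i) u = - (\<Sum>k=1..d. S i k (app (adjoint (N k)) u))"
    using assms(2) by blast+
qed

lemma dom_F: "(\<Inter>i\<in>{0..d}. \<Inter>j\<in>{0..d}. dom (F i j)) = dom K"
proof
  show "dom K \<subseteq> (\<Inter>i\<in>{0..d}. \<Inter>j\<in>{0..d}. dom (F i j))"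
  proof (intro subsetI INT_I)
    fix u i j
    assume u: "u \<in> dom K" and "i \<in> {0..d}" "j \<in> {0..d}"
    then consider "i = 0" "j = 0" | "i = 0" "j \<in> {1..d}" | "i \<in> {1..d}" "j = 0"
      | "i \<in> {1..d}" "j \<in> {1..d}"
      by fastforce
    then show "u \<in> dom (F i j)"
    proof cases
      case 2
      then show ?thesis
        using N_dom u by blast
    next
      case 3
      then show ?thesis
        using dom_K(1)[OF u] by blast
    next
      case 4
      then show ?thesis
        using F_S by (simp add: op_eq_def)
    qed (use u in simp)
  qed
qed auto

lemma N_eq_sum_adjoint_R:
  assumes u: "u \<in> dom K" and i: "i \<in> {1..d}"
  shows "app (N i) u = - (\<Sum>k=1..d. app (adjoint (R k)) (S k i u))"
proof (rule dense_cinner_eq)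
  show "closure Dt = UNIV"
    using Dt(1) by (simp add: dense_subspace_def)
  fix v
  assume v: "v \<in> Dt"
  have "cinner v (app (N i) u) = cinner (app (adjoint (N i)) v) u"
    using N_adj_dom[OF i] N_dom[OF i] u v by (simp add: cinner_adjoint_left subset_iff)
  also have "\<dots> = - (\<Sum>k=1..d. cinner (badj (S k i) (app (R k) v)) u)"
    using N_adj_eq[OF i] v by (simp add: cinner_minus_left cinner_sum_left)
  also have "\<dots> = - (\<Sum>k=1..d. cinner v (app (adjoint (R k)) (S k i u)))"
  proof -
    have "cinner (badj (S k i) (app (R k) v)) u = cinner v (app (adjoint (R k)) (S k i u))"
      if k: "k \<in> {1..d}" for k
      using cinner_badj_left[OF S_bounded[OF k i]] cinner_adjoint[OF S_dom[OF k i u]]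
        R_dom[OF k] v by auto
    then show ?thesis
      by simp
  qed
  also have "\<dots> = cinner v (- (\<Sum>k=1..d. app (adjoint (R k)) (S k i u)))"
    by (simp add: cinner_minus_right cinner_sum_right)
  finally show "cinner v (app (N i) u) = cinner v (- (\<Sum>k=1..d. app (adjoint (R k)) (S k i u)))" .
qed

lemma F_form_vanishes:
  assumes "\<And>i. i \<le> d \<Longrightarrow> u i \<in> dom K"
  shows "(\<Sum>i=0..d. \<Sum>j=0..d. cinner (u i) (app (F i j) (u j)) + cinner (app (F j i) (u i)) (u j)
      + (\<Sum>k=1..d. cinner (app (F k i) (u i)) (app (F k j) (u j)))) = 0"
proof (rule block_form_vanishes[where G = "\<lambda>i j. app (F i j)" and T = S])
  show "app (F i j) (u j) = S i j (u j) - (if i = j then u j else 0)"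
    if "i \<in> {1..d}" "j \<in> {1..d}" for i j
    using F_block(1)[OF that] .
  show "(\<Sum>k=1..d. cinner (S k i (u i)) (S k j (u j))) = (if i = j then cinner (u i) (u j) else 0)"
    if i: "i \<in> {1..d}" and j: "j \<in> {1..d}" for i j
  proof -
    have "(\<Sum>k=1..d. cinner (S k i (u i)) (S k j (u j)))
        = cinner (u i) (\<Sum>k=1..d. badj (S k i) (S k j (u j)))"
      by (simp add: cinner_sum_right cinner_badj[OF S_bounded[OF _ i]])
    also have "\<dots> = cinner (u i) (if i = j then u j else 0)"
      by (simp only: S_isometric[OF i j])
    finally show ?thesis
      by simp
  qed
  show "2 * Re (cinner (app K (u 0)) (u 0)) = - (\<Sum>k=1..d. (norm (app (R k) (u 0)))\<^sup>2)"
    using dom_K(2) assms by simp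
  show "cinner (u 0) (app (N j) (u j)) = - (\<Sum>k=1..d. cinner (app (R k) (u 0)) (S k j (u j)))"
    if j: "j \<in> {1..d}" for j
  proof -
    have "cinner (u 0) (app (N j) (u j)) = cinner (app (adjoint (N j)) (u 0)) (u j)"
      using dom_K(1)[of "u 0" j] N_dom[OF j] assms j by (simp add: cinner_adjoint_left subset_iff)
    also have "\<dots> = - (\<Sum>k=1..d. cinner (app (R k) (u 0)) (S k j (u j)))"
      using dom_K(3)[of "u 0" j] assms j
      by (simp add: cinner_minus_left cinner_sum_left cinner_badj_left[OF S_bounded[OF _ j]])
    finally show ?thesis .
  qed
qed

lemma adjoint_F_form_vanishes:
  assumes "\<And>i. i \<le> d \<Longrightarrow> v i \<in> Dt"
  shows "(\<Sum>i=0..d. \<Sum>j=0..d.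
      cinner (v i) (app (adjoint (F j i)) (v j)) + cinner (app (adjoint (F i j)) (v i)) (v j)
      + (\<Sum>k=1..d. cinner (app (adjoint (F i k)) (v i)) (app (adjoint (F j k)) (v j)))) = 0"
proof (rule block_form_vanishes[where G = "\<lambda>i j. app (adjoint (F j i))" and T = "\<lambda>i j. badj (S j i)"])
  show "app (adjoint (F j i)) (v j) = badj (S j i) (v j) - (if i = j then v j else 0)"
    if "i \<in> {1..d}" "j \<in> {1..d}" for i j
    using F_block(2)[of j i] that by auto
  show "(\<Sum>k=1..d. cinner (badj (S i k) (v i)) (badj (S j k) (v j)))
      = (if i = j then cinner (v i) (v j) else 0)"
    if i: "i \<in> {1..d}" and j: "j \<in> {1..d}" for i j
  proof -
    have "(\<Sum>k=1..d. cinner (badj (S i k) (v i)) (badj (S j k) (v j)))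
        = cinner (v i) (\<Sum>k=1..d. S i k (badj (S j k) (v j)))"
      by (simp add: cinner_sum_right cinner_badj_left[OF S_bounded[OF i]])
    also have "\<dots> = cinner (v i) (if i = j then v j else 0)"
      by (simp only: S_coisometric[OF i j])
    finally show ?thesis
      by simp
  qed
  have v0: "v 0 \<in> dom (adjoint K)"
    using assms[of 0] Dt(2) by (auto simp: is_core_def)
  show "2 * Re (cinner (app (adjoint K) (v 0)) (v 0))
      = - (\<Sum>k=1..d. (norm (app (adjoint (N k)) (v 0)))\<^sup>2)"
    using dom_K_adjoint(2)[OF v0] .
  show "cinner (v 0) (app (adjoint (R j)) (v j))
      = - (\<Sum>k=1..d. cinner (app (adjoint (N k)) (v 0)) (badj (S j k) (v j)))"
    if j: "j \<in> {1..d}" for j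
  proof -
    have "cinner (v 0) (app (adjoint (R j)) (v j)) = cinner (app (R j) (v 0)) (v j)"
      using Dt_dom[OF j] R_dom[OF j] assms j by (simp add: cinner_adjoint subset_iff)
    also have "\<dots> = - (\<Sum>k=1..d. cinner (app (adjoint (N k)) (v 0)) (badj (S j k) (v j)))"
      using dom_K_adjoint(3)[OF v0 j]
      by (simp add: cinner_minus_left cinner_sum_left cinner_badj[OF S_bounded[OF j]])
    finally show ?thesis .
  qed
qed

end

theorem mainTheorem1:
  fixes F :: "nat \<Rightarrow> nat \<Rightarrow> 'a::chilbert_space linop"
    and S :: "nat \<Rightarrow> nat \<Rightarrow> 'a \<Rightarrow> 'a"
    and d :: nat
    and D Dt :: "'a set"
    and C :: "'a linop"
    and \<delta> b1 b2 :: real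
  assumes separable: "\<exists>A::'a set. countable A \<and> closure A = UNIV"
    and d_pos: "d \<ge> 1"
    \<comment> \<open>(i)\<close>
    and C_i: "\<forall>i\<le>d. \<forall>j\<le>d. closed_op (F i j)"
    \<comment> \<open>(ii)\<close>
    and C_ii_F: "\<forall>i\<in>{1..d}. \<forall>j\<in>{1..d}.
                   op_eq (F i j) (UNIV, \<lambda>u. S i j u - (if i = j then u else 0))"
    and C_ii_bdd: "\<forall>i\<in>{1..d}. \<forall>j\<in>{1..d}. bounded_clinear (S i j)"
    and C_ii_iso: "\<forall>i\<in>{1..d}. \<forall>j\<in>{1..d}. \<forall>u.
                   (\<Sum>k=1..d. badj (S k i) (S k j u)) = (if i = j then u else 0)"
    and C_ii_coiso: "\<forall>i\<in>{1..d}. \<forall>j\<in>{1..d}. \<forall>u.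
                   (\<Sum>k=1..d. S i k (badj (S j k) u)) = (if i = j then u else 0)"
    \<comment> \<open>(iii)\<close>
    and C_iii_D: "dense_subspace D \<and> is_core D (F 0 0) \<and>
                  (\<forall>i\<in>{1..d}. is_core D (F i 0) \<and> is_core D (F 0 i))"
    and C_iii_Dt: "dense_subspace Dt \<and> is_core Dt (adjoint (F 0 0)) \<and>
                  (\<forall>i\<in>{1..d}. is_core Dt (adjoint (F i 0)) \<and> is_core Dt (adjoint (F 0 i)))"
    \<comment> \<open>(iv)\<close>
    and C_iv: "\<forall>i\<in>{1..d}. D \<union> Dt \<subseteq> dom (adjoint (F 0 i)) \<and> D \<union> Dt \<subseteq> dom (F i 0) \<and>
                  dom (F 0 0) \<subseteq> dom (F 0 i)"
    \<comment> \<open>(v)\<close>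
    and C_v: "\<forall>k\<in>{1..d}. \<forall>i\<in>{1..d}. \<forall>u\<in>dom (F 0 0). S k i u \<in> dom (adjoint (F k 0))"
    \<comment> \<open>(vi)\<close>
    and C_vi_gen: "generates_contraction_sg (F 0 0) \<and> generates_contraction_sg (adjoint (F 0 0))"
    and C_vi_D: "\<forall>u\<in>D. 2 * Re (cinner (app (F 0 0) u) u) = - (\<Sum>k=1..d. (norm (app (F k 0) u))\<^sup>2)"
    and C_vi_Dt: "\<forall>v\<in>Dt. 2 * Re (cinner (app (adjoint (F 0 0)) v) v)
                     = - (\<Sum>k=1..d. (norm (app (adjoint (F 0 k)) v))\<^sup>2)"
    \<comment> \<open>(vii)\<close>
    and C_vii: "\<forall>i\<in>{1..d}. \<forall>u\<in>D \<union> Dt.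
                  app (adjoint (F 0 i)) u = - (\<Sum>k=1..d. badj (S k i) (app (F k 0) u))"
    \<comment> \<open>(viii)\<close>
    and C_viii_C: "pos_selfadjoint C"
    and C_viii_const: "\<delta> > 0 \<and> b1 \<ge> 0 \<and> b2 \<ge> 0"
    and C_viii_dom: "dom (op_sqrt C) \<subseteq> (\<Inter>i\<in>{0..d}. \<Inter>j\<in>{0..d}. dom (F i j))"
    and C_viii_a: "\<forall>\<epsilon>\<in>{0<..<\<delta>}. \<exists>De. dense_subspace De \<and> De \<subseteq> Dt \<and>
                     app (op_sqrt (C_eps \<epsilon> C)) ` De \<subseteq> Dt \<and>
                     (\<forall>i\<le>d. \<forall>j\<le>d. \<exists>M. \<forall>u\<in>De.
                        app (op_sqrt (C_eps \<epsilon> C)) u \<in> dom (adjoint (F i j)) \<and>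
                        norm (app (adjoint (F i j)) (app (op_sqrt (C_eps \<epsilon> C)) u)) \<le> M * norm u)"
    and C_viii_b: "\<forall>\<epsilon>\<in>{0<..<\<delta>}. \<forall>u::nat \<Rightarrow> 'a.
                     (\<forall>i\<le>d. u i \<in> (\<Inter>i\<in>{0..d}. \<Inter>j\<in>{0..d}. dom (F i j))) \<longrightarrow>
                     Re (\<Sum>i=0..d. \<Sum>j=0..d.
                          cinner (u i) (app (C_eps \<epsilon> C) (app (F i j) (u j)))
                        + cinner (app (F j i) (u i)) (app (C_eps \<epsilon> C) (u j))
                        + (\<Sum>k=1..d. cinner (app (F k i) (u i)) (app (C_eps \<epsilon> C) (app (F k j) (u j)))))
                     \<le> (\<Sum>i=0..d. b1 * Re (cinner (u i) (app (C_eps \<epsilon> C) (u i))) + b2 * (norm (u i))\<^sup>2)"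
  shows
    \<comment> \<open>(1)\<close>
    "(\<forall>k\<in>{1..d}. dom (F 0 0) \<union> dom (adjoint (F 0 0)) \<subseteq> dom (F k 0) \<and>
                  dom (F 0 0) \<union> dom (adjoint (F 0 0)) \<subseteq> dom (adjoint (F 0 k)))
     \<comment> \<open>(2)\<close>
     \<and> (\<Inter>i\<in>{0..d}. \<Inter>j\<in>{0..d}. dom (F i j)) = dom (F 0 0)
     \<and> (\<forall>u\<in>dom (F 0 0). 2 * Re (cinner (app (F 0 0) u) u) = - (\<Sum>k=1..d. (norm (app (F k 0) u))\<^sup>2))
     \<and> (\<forall>v\<in>dom (adjoint (F 0 0)). 2 * Re (cinner (app (adjoint (F 0 0)) v) v)
                     = - (\<Sum>k=1..d. (norm (app (adjoint (F 0 k)) v))\<^sup>2))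
     \<comment> \<open>(3)\<close>
     \<and> (\<forall>i\<in>{1..d}. \<forall>u\<in>dom (F 0 0) \<union> dom (adjoint (F 0 0)).
          app (adjoint (F 0 i)) u = - (\<Sum>k=1..d. badj (S k i) (app (F k 0) u)) \<and>
          app (F i 0) u = - (\<Sum>k=1..d. S i k (app (adjoint (F 0 k)) u)))
     \<comment> \<open>(4)\<close>
     \<and> (\<forall>i\<in>{1..d}. \<forall>u\<in>dom (F 0 0).
          app (F 0 i) u = - (\<Sum>k=1..d. app (adjoint (F k 0)) (S k i u)))
     \<comment> \<open>(5)\<close>
     \<and> (\<forall>u::nat \<Rightarrow> 'a. (\<forall>i\<le>d. u i \<in> (\<Inter>i\<in>{0..d}. \<Inter>j\<in>{0..d}. dom (F i j))) \<longrightarrow>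
          (\<Sum>i=0..d. \<Sum>j=0..d.
              cinner (u i) (app (F i j) (u j)) + cinner (app (F j i) (u i)) (u j)
            + (\<Sum>k=1..d. cinner (app (F k i) (u i)) (app (F k j) (u j)))) = 0)
     \<and> (\<forall>v::nat \<Rightarrow> 'a. (\<forall>i\<le>d. v i \<in> Dt) \<longrightarrow>
          (\<Sum>i=0..d. \<Sum>j=0..d.
              cinner (v i) (app (adjoint (F j i)) (v j)) + cinner (app (adjoint (F i j)) (v i)) (v j)
            + (\<Sum>k=1..d. cinner (app (adjoint (F i k)) (v i)) (app (adjoint (F j k)) (v j)))) = 0)"
proof -
  interpret hypothesis_C F S d D Dt
    by unfold_locales (use C_i C_ii_F C_ii_bdd C_ii_iso C_ii_coiso C_iii_D C_iii_Dt C_iv C_v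
        C_vi_D C_vi_Dt C_vii in \<open>simp_all add: is_core_def\<close>)
  show ?thesis
    unfolding dom_F
    using dom_K(1,2) dom_K_adjoint(1,2) R_N_relations N_eq_sum_adjoint_R F_form_vanishes adjoint_F_form_vanishes
    by (intro conjI; blast)
qed

end
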